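(* (Gronwall-type lemma.) Let $z\in C^{\beta\text{-Hol}}([-r,T],\mathbb{R}^d)$ and suppose there are constants $A,C>0$ such that for all $0\le s\le t\le T$, $$|||z|||_{\beta,[s,t]}\le A+C\big((t-s)^{1-\beta}+(t-s)^{\nu-\beta}|||\omega|||_{\nu,[s,t]}\big)\|z\|_{\infty,\beta,[s-r,t]}.$$ Let $\mu\in(0,\min\{\tfrac12,C\})$ and let $N(t,\omega)$ be the counting function of the stopping times associated with this $C$ and $\mu$. Then for all $t\in[0,T]$, $$\|z_t\|_{\infty,\beta,[-r,0]}\le(1-2\mu)^{-(N(t,\omega)+1)}\Big[\frac{A}{\mu}+\|z\|_{\infty,\beta,[-r,0]}\Big].$$
   Context: $\|\cdot\|$ is the Euclidean norm; $r,T>0$; $z_t(u)=z(t+u)$, $u\in[-r,0]$. For $0<\alpha\le1$: $|||z|||_{\alpha,[a,b]}=\sup_{a\le s<t\le b}\frac{\|z(t)-z(s)\|}{(t-s)^\alpha}$, $\|z\|_{\infty,\alpha,[a,b]}=\sup_{[a,b]}\|z\|+|||z|||_{\alpha,[a,b]}$, $C^{\alpha\text{-Hol}}$ the space where finite. Parameters: $\nu\in(\tfrac12,1]$, $\beta\in(0,\nu)$, $\omega\in C^{\nu\text{-Hol}}([0,T],\mathbb{R})$ with $\lim_{h\to0}\sup_{0\le s<t\le T,\,t-s\le h}\frac{|\omega(t)-\omega(s)|}{(t-s)^\nu}=0$. Stopping times: given $C>0$ and $\mu\in(0,C)$, $t_0=0$, $t_{i+1}=\sup\{t\in[t_i,T]: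 C[(t-t_i)^{1-\beta}+(t-t_i)^{\nu-\beta}|||\omega|||_{\nu,[t_i,t]}]\le\mu\}$; counting function $N(t,\omega):=\#\{i\ge1:t_i<t\}$. *)

theory Defs
  imports "HOL-Analysis.Analysis"
begin

definition holder_quot :: "real \<Rightarrow> (real \<Rightarrow> 'a::real_normed_vector) \<Rightarrow> real \<Rightarrow> real \<Rightarrow> real set" where
  "holder_quot \<alpha> z a b = {norm (z t - z s) / (t - s) powr \<alpha> | s t. a \<le> s \<and> s < t \<and> t \<le> b}"

definition holder_semi :: "real \<Rightarrow> (real \<Rightarrow> 'a::real_normed_vector) \<Rightarrow> real \<Rightarrow> real \<Rightarrow> real" where
  "holder_semi \<alpha> z a b = (if a < b then Sup (holder_quot \<alpha> z a b) else 0)"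

definition holder_space :: "real \<Rightarrow> real \<Rightarrow> real \<Rightarrow> (real \<Rightarrow> 'a::real_normed_vector) \<Rightarrow> bool" where
  "holder_space \<alpha> a b z \<longleftrightarrow> bdd_above (holder_quot \<alpha> z a b)"

definition sup_norm :: "(real \<Rightarrow> 'a::real_normed_vector) \<Rightarrow> real \<Rightarrow> real \<Rightarrow> real" where
  "sup_norm z a b = Sup ((\<lambda>t. norm (z t)) ` {a..b})"

definition holder_norm :: "real \<Rightarrow> (real \<Rightarrow> 'a::real_normed_vector) \<Rightarrow> real \<Rightarrow> real \<Rightarrow> real" where
  "holder_norm \<alpha> z a b = sup_norm z a b + holder_semi \<alpha> z a b"

fun stop_time :: "real \<Rightarrow> real \<Rightarrow> real \<Rightarrow> real \<Rightarrow> (real \<Rightarrow> real) \<Rightarrow> real \<Rightarrow> nat \<Rightarrow> real" where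
  "stop_time C \<mu> \<beta> \<nu> \<omega> T 0 = 0"
| "stop_time C \<mu> \<beta> \<nu> \<omega> T (Suc i) =
     (let ti = stop_time C \<mu> \<beta> \<nu> \<omega> T i in
      Sup {t \<in> {ti..T}. C * ((t - ti) powr (1 - \<beta>) + (t - ti) powr (\<nu> - \<beta>) * holder_semi \<nu> \<omega> ti t) \<le> \<mu>})"

definition count_stop :: "real \<Rightarrow> real \<Rightarrow> real \<Rightarrow> real \<Rightarrow> (real \<Rightarrow> real) \<Rightarrow> real \<Rightarrow> real \<Rightarrow> nat" where
  "count_stop C \<mu> \<beta> \<nu> \<omega> T t = card {i. i \<ge> 1 \<and> stop_time C \<mu> \<beta> \<nu> \<omega> T i < t}"

end

theory Submission
  imports Defs
begin

text \<open>Write \<phi>(t) for the norm of z on [-r,t] and call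
  C ((t-s)^(1-\<beta>) + (t-s)^(\<nu>-\<beta>) |||\<omega>|||_(\<nu>,[s,t])) the gauge of [s,t].
  On an interval whose gauge is at most \<mu> < C we have t - s < 1, so splitting the norm at s and
  inserting the hypothesis gives \<phi>(t) \<le> \<phi>(s) + 2A + 2\<mu>\<phi>(t), that is
  \<phi>(t) + A/\<mu> \<le> (\<phi>(s) + A/\<mu>) / (1 - 2\<mu>).
  Consecutive stopping times bound maximal such intervals; the gauge is left-continuous, so the
  estimate holds up to the right endpoint, and the uniform Hoelder bound of \<omega> makes the stopping
  times reach T after finitely many steps. Iterating over the N(t) stopping times before t gives
  the factor (1 - 2\<mu>)^-(N(t)+1).\<close>

section \<open>Hoelder seminorms\<close>

lemma holder_quot_le_holder_semi:
  assumes "holder_space \<alpha> a b z" "a \<le> s" "s < t" "t \<le> b"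
  shows "norm (z t - z s) / (t - s) powr \<alpha> \<le> holder_semi \<alpha> z a b"
proof -
  have "norm (z t - z s) / (t - s) powr \<alpha> \<in> holder_quot \<alpha> z a b"
    unfolding holder_quot_def using assms by blast
  then show ?thesis
    using assms by (auto simp: holder_semi_def holder_space_def intro: cSup_upper)
qed

lemma holder_semi_nonneg:
  assumes "holder_space \<alpha> a b z"
  shows "0 \<le> holder_semi \<alpha> z a b"
proof (cases "a < b")
  case True
  have "0 \<le> norm (z b - z a) / (b - a) powr \<alpha>" by simp
  also have "\<dots> \<le> holder_semi \<alpha> z a b"
    using holder_quot_le_holder_semi[OF assms, of a b] True by simp
  finally show ?thesis .
qed (simp add: holder_semi_def)

lemma norm_diff_le_holder_semi:
  assumes "holder_space \<alpha> a b z" "a \<le> s" "s \<le> t" "t \<le> b"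
  shows "norm (z t - z s) \<le> holder_semi \<alpha> z a b * (t - s) powr \<alpha>"
proof (cases "s < t")
  case True
  then show ?thesis
    using holder_quot_le_holder_semi[OF assms(1,2) True assms(4)] by (simp add: divide_le_eq)
qed (use assms holder_semi_nonneg[OF assms(1)] in simp)

lemma holder_semi_leI:
  assumes "\<And>s t. a \<le> s \<Longrightarrow> s < t \<Longrightarrow> t \<le> b \<Longrightarrow> norm (z t - z s) \<le> M * (t - s) powr \<alpha>"
    and "0 \<le> M"
  shows "holder_semi \<alpha> z a b \<le> M"
proof (cases "a < b")
  case True
  have "Sup (holder_quot \<alpha> z a b) \<le> M"
  proof (rule cSup_least)
    show "holder_quot \<alpha> z a b \<noteq> {}" unfolding holder_quot_def using True by blast
    fix x assume "x \<in> holder_quot \<alpha> z a b"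
    then obtain s t where "x = norm (z t - z s) / (t - s) powr \<alpha>" "a \<le> s" "s < t" "t \<le> b"
      unfolding holder_quot_def by blast
    with assms(1)[of s t] show "x \<le> M" by (simp add: divide_le_eq)
  qed
  then show ?thesis using True unfolding holder_semi_def by simp
qed (use assms in \<open>simp add: holder_semi_def\<close>)

lemma holder_space_subinterval:
  assumes "holder_space \<alpha> a b z" "a \<le> a'" "b' \<le> b"
  shows "holder_space \<alpha> a' b' z"
proof -
  have "holder_quot \<alpha> z a' b' \<subseteq> holder_quot \<alpha> z a b"
    unfolding holder_quot_def using assms(2,3) by fastforce
  then show ?thesis using assms(1) unfolding holder_space_def by (rule bdd_above_mono[rotated])
qed

lemma holder_semi_mono:
  assumes "holder_space \<alpha> a b z" "a \<le> a'" "b' \<le> b"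
  shows "holder_semi \<alpha> z a' b' \<le> holder_semi \<alpha> z a b"
  using assms norm_diff_le_holder_semi[OF assms(1)] holder_semi_nonneg[OF assms(1)]
  by (intro holder_semi_leI) auto

text \<open>An increment across c splits into the increments of the paths stopped at c and started
  at c, since z (min x c) + z (max x c) = z x + z c.\<close>
lemma holder_semi_concat_le:
  assumes "holder_space \<alpha> a c z" "holder_space \<alpha> c b z" "a \<le> c" "c \<le> b" "0 \<le> \<alpha>"
  shows "holder_semi \<alpha> z a b \<le> holder_semi \<alpha> z a c + holder_semi \<alpha> z c b"
proof (rule holder_semi_leI)
  let ?S1 = "holder_semi \<alpha> z a c" and ?S2 = "holder_semi \<alpha> z c b"
  have S: "0 \<le> ?S1" "0 \<le> ?S2"
    using holder_semi_nonneg[OF assms(1)] holder_semi_nonneg[OF assms(2)] .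
  then show "0 \<le> ?S1 + ?S2" by simp
  fix s t assume st: "a \<le> s" "s < t" "t \<le> b"
  have "z t - z s = (z (min t c) - z (min s c)) + (z (max t c) - z (max s c))"
    by (cases "t \<le> c"; cases "s \<le> c") (use st in auto)
  then have "norm (z t - z s) \<le> norm (z (min t c) - z (min s c)) + norm (z (max t c) - z (max s c))"
    by (metis norm_triangle_ineq)
  also have "\<dots> \<le> ?S1 * (min t c - min s c) powr \<alpha> + ?S2 * (max t c - max s c) powr \<alpha>"
    using st assms(3,4) by (intro add_mono norm_diff_le_holder_semi assms(1,2)) auto
  also have "\<dots> \<le> ?S1 * (t - s) powr \<alpha> + ?S2 * (t - s) powr \<alpha>"
    using st S assms(5) by (intro add_mono mult_left_mono powr_mono2) auto
  finally show "norm (z t - z s) \<le> (?S1 + ?S2) * (t - s) powr \<alpha>"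
    by (simp add: distrib_right)
qed

lemma holder_quot_translate:
  "holder_quot \<alpha> (\<lambda>u. z (c + u)) a b = holder_quot \<alpha> z (c + a) (c + b)"
  unfolding holder_quot_def
proof (intro equalityI subsetI; clarify)
  fix s t assume "a \<le> s" "s < t" "t \<le> b"
  then show "\<exists>s' t'. norm (z (c + t) - z (c + s)) / (t - s) powr \<alpha> = norm (z t' - z s') / (t' - s') powr \<alpha>
      \<and> c + a \<le> s' \<and> s' < t' \<and> t' \<le> c + b"
    by (intro exI[of _ "c + s"] exI[of _ "c + t"]) simp
next
  fix s t assume "c + a \<le> s" "s < t" "t \<le> c + b"
  then show "\<exists>s' t'. norm (z t - z s) / (t - s) powr \<alpha> = norm (z (c + t') - z (c + s')) / (t' - s') powr \<alpha>
      \<and> a \<le> s' \<and> s' < t' \<and> t' \<le> b"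
    by (intro exI[of _ "s - c"] exI[of _ "t - c"]) simp
qed

lemma holder_norm_translate:
  "holder_norm \<alpha> (\<lambda>u. z (c + u)) a b = holder_norm \<alpha> z (c + a) (c + b)"
proof -
  have "(\<lambda>u. norm (z (c + u))) ` {a..b} = (\<lambda>t. norm (z t)) ` {c + a..c + b}"
    using image_image[of "\<lambda>t. norm (z t)" "plus c" "{a..b}"] by (simp add: add.commute)
  then show ?thesis
    by (simp add: holder_norm_def sup_norm_def holder_semi_def holder_quot_translate)
qed

lemma norm_le_sup_norm:
  assumes "bdd_above ((\<lambda>t. norm (z t)) ` {a..b})" "u \<in> {a..b}"
  shows "norm (z u) \<le> sup_norm z a b"
  unfolding sup_norm_def using assms by (auto intro: cSup_upper)

lemma sup_norm_leI:
  assumes "a \<le> b" "\<And>u. u \<in> {a..b} \<Longrightarrow> norm (z u) \<le> M"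
  shows "sup_norm z a b \<le> M"
  unfolding sup_norm_def using assms by (auto intro!: cSup_least)

lemma holder_space_bdd_norm:
  assumes "holder_space \<alpha> a b z" "0 \<le> \<alpha>"
  shows "bdd_above ((\<lambda>t. norm (z t)) ` {a..b})"
proof (rule bdd_aboveI2)
  let ?S = "holder_semi \<alpha> z a b"
  fix u assume u: "u \<in> {a..b}"
  have "norm (z u) \<le> norm (z a) + norm (z u - z a)" by (simp add: norm_triangle_sub)
  also have "norm (z u - z a) \<le> ?S * (u - a) powr \<alpha>"
    using u by (intro norm_diff_le_holder_semi[OF assms(1)]) auto
  also have "?S * (u - a) powr \<alpha> \<le> ?S * (b - a) powr \<alpha>"
    using u assms holder_semi_nonneg[OF assms(1)] by (intro mult_left_mono powr_mono2) auto
  finally show "norm (z u) \<le> norm (z a) + ?S * (b - a) powr \<alpha>" by simp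
qed

lemma holder_space_continuous_on:
  assumes "holder_space \<alpha> a b z" "0 < \<alpha>"
  shows "continuous_on {a..b} z"
  unfolding continuous_on_def
proof
  fix x assume x: "x \<in> {a..b}"
  let ?S = "holder_semi \<alpha> z a b"
  have "norm (z u - z x) \<le> ?S * \<bar>u - x\<bar> powr \<alpha>" if "u \<in> {a..b}" for u
    using that x norm_diff_le_holder_semi[OF assms(1), of u x] norm_diff_le_holder_semi[OF assms(1), of x u]
    by (cases "u \<le> x") (auto simp: norm_minus_commute)
  then have "eventually (\<lambda>u. norm (z u - z x) \<le> ?S * \<bar>u - x\<bar> powr \<alpha>) (at x within {a..b})"
    by (auto simp: eventually_at_filter)
  moreover have "((\<lambda>u. ?S * \<bar>u - x\<bar> powr \<alpha>) \<longlongrightarrow> 0) (at x within {a..b})"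
    using assms(2) by (intro tendsto_mult_right_zero tendsto_zero_powrI tendsto_rabs_zero LIM_zero
        tendsto_ident_at tendsto_const) auto
  ultimately have "((\<lambda>u. z u - z x) \<longlongrightarrow> 0) (at x within {a..b})"
    by (rule Lim_null_comparison)
  then show "(z \<longlongrightarrow> z x) (at x within {a..b})" by (rule LIM_zero_cancel)
qed

lemma holder_semi_tendsto_at_left:
  assumes "holder_space \<alpha> a b z" "0 < \<alpha>" "a < b"
  shows "((\<lambda>u. holder_semi \<alpha> z a u) \<longlongrightarrow> holder_semi \<alpha> z a b) (at_left b)"
proof (rule tendstoI)
  fix e :: real assume e: "0 < e"
  let ?H = "holder_semi \<alpha> z a b"
  have semi_ge: "norm (z t - z s) / (t - s) powr \<alpha> \<le> holder_semi \<alpha> z a u"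
    if "a \<le> s" "s < t" "t \<le> u" "u \<le> b" for s t u
    using that by (intro holder_quot_le_holder_semi holder_space_subinterval[OF assms(1)]) auto
  have "?H - e < Sup (holder_quot \<alpha> z a b)" using e assms(3) by (simp add: holder_semi_def)
  moreover have "holder_quot \<alpha> z a b \<noteq> {}" unfolding holder_quot_def using assms(3) by blast
  ultimately obtain Q where "Q \<in> holder_quot \<alpha> z a b" "?H - e < Q"
    by (blast dest: less_cSupE)
  then obtain s t where st: "a \<le> s" "s < t" "t \<le> b"
    and Q: "?H - e < norm (z t - z s) / (t - s) powr \<alpha>"
    unfolding holder_quot_def by blast
  have "eventually (\<lambda>u. ?H - e < holder_semi \<alpha> z a u) (at_left b)"
  proof (cases "t < b")
    case True
    from eventually_at_left_real[OF True] show ?thesis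
    proof (rule eventually_mono)
      fix u assume "u \<in> {t<..<b}"
      then have "norm (z t - z s) / (t - s) powr \<alpha> \<le> holder_semi \<alpha> z a u"
        using st by (intro semi_ge) auto
      with Q show "?H - e < holder_semi \<alpha> z a u" by linarith
    qed
  next
    case False
    then have "t = b" using st by simp
    have "((\<lambda>u. norm (z u - z s) / (u - s) powr \<alpha>) \<longlongrightarrow> norm (z b - z s) / (b - s) powr \<alpha>) (at_left b)"
      using continuous_on_Icc_at_leftD[OF holder_space_continuous_on[OF assms(1,2)] assms(3)] st
      by (intro tendsto_intros) auto
    then have "eventually (\<lambda>u. ?H - e < norm (z u - z s) / (u - s) powr \<alpha>) (at_left b)"
      using Q \<open>t = b\<close> by (intro order_tendstoD(1)) auto
    moreover have "eventually (\<lambda>u. u \<in> {s<..<b}) (at_left b)"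
      using st \<open>t = b\<close> by (intro eventually_at_left_real) simp
    ultimately show ?thesis
    proof eventually_elim
      case (elim u)
      then have "norm (z u - z s) / (u - s) powr \<alpha> \<le> holder_semi \<alpha> z a u"
        using st by (intro semi_ge) auto
      with elim show ?case by linarith
    qed
  qed
  moreover have "eventually (\<lambda>u. holder_semi \<alpha> z a u \<le> ?H) (at_left b)"
    using eventually_at_left_real[OF assms(3)]
    by (rule eventually_mono) (use holder_semi_mono[OF assms(1)] in auto)
  ultimately show "eventually (\<lambda>u. dist (holder_semi \<alpha> z a u) ?H < e) (at_left b)"
    by eventually_elim (auto simp: dist_real_def)
qed

lemma sup_norm_concat_le:
  assumes "holder_space \<alpha> a b z" "0 \<le> \<alpha>" "a \<le> c" "c \<le> b" "b - c \<le> 1"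
  shows "sup_norm z a b \<le> sup_norm z a c + holder_semi \<alpha> z c b"
proof (rule sup_norm_leI)
  let ?S = "holder_semi \<alpha> z c b"
  have hol: "holder_space \<alpha> c b z" using assms by (intro holder_space_subinterval[OF assms(1)]) auto
  have bdd: "bdd_above ((\<lambda>t. norm (z t)) ` {a..c})"
    using assms by (intro holder_space_bdd_norm[OF holder_space_subinterval[OF assms(1)]]) auto
  have S: "0 \<le> ?S" by (rule holder_semi_nonneg[OF hol])
  show "a \<le> b" using assms by simp
  fix u assume u: "u \<in> {a..b}"
  show "norm (z u) \<le> sup_norm z a c + ?S"
  proof (cases "u \<le> c")
    case True
    then show ?thesis using norm_le_sup_norm[OF bdd, of u] u S by simp
  next
    case False
    have "norm (z u) \<le> norm (z c) + norm (z u - z c)" by (simp add: norm_triangle_sub)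
    also have "norm (z u - z c) \<le> ?S * (u - c) powr \<alpha>"
      using False u by (intro norm_diff_le_holder_semi[OF hol]) auto
    also have "\<dots> \<le> ?S * 1"
      using False u assms S by (intro mult_left_mono powr_le1) auto
    also have "norm (z c) \<le> sup_norm z a c" using norm_le_sup_norm[OF bdd, of c] assms by simp
    finally show ?thesis by simp
  qed
qed

lemma holder_norm_concat_le:
  assumes "holder_space \<alpha> a b z" "0 \<le> \<alpha>" "a \<le> c" "c \<le> b" "b - c \<le> 1"
  shows "holder_norm \<alpha> z a b \<le> holder_norm \<alpha> z a c + 2 * holder_semi \<alpha> z c b"
proof -
  have "holder_semi \<alpha> z a b \<le> holder_semi \<alpha> z a c + holder_semi \<alpha> z c b"
    using assms holder_space_subinterval[OF assms(1), of a c] holder_space_subinterval[OF assms(1), of c b]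
    by (intro holder_semi_concat_le) auto
  then show ?thesis using sup_norm_concat_le[OF assms] unfolding holder_norm_def by simp
qed

lemma holder_norm_mono:
  assumes "holder_space \<alpha> a b z" "0 \<le> \<alpha>" "a \<le> a'" "a' \<le> b'" "b' \<le> b"
  shows "holder_norm \<alpha> z a' b' \<le> holder_norm \<alpha> z a b"
proof -
  have "sup_norm z a' b' \<le> sup_norm z a b"
    using assms norm_le_sup_norm[OF holder_space_bdd_norm[OF assms(1,2)]] by (intro sup_norm_leI) auto
  moreover have "holder_semi \<alpha> z a' b' \<le> holder_semi \<alpha> z a b"
    using assms by (intro holder_semi_mono) auto
  ultimately show ?thesis unfolding holder_norm_def by simp
qed

lemma holder_norm_nonneg:
  assumes "holder_space \<alpha> a b z" "0 \<le> \<alpha>" "a \<le> b"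
  shows "0 \<le> holder_norm \<alpha> z a b"
proof -
  have "norm (z a) \<le> sup_norm z a b"
    using assms by (intro norm_le_sup_norm holder_space_bdd_norm) auto
  then show ?thesis
    using holder_semi_nonneg[OF assms(1)] norm_ge_zero[of "z a"] unfolding holder_norm_def by linarith
qed

section \<open>Stopping times\<close>

declare stop_time.simps(2) [simp del]

locale stopping_times =
  fixes C \<mu> \<beta> \<nu> T :: real and \<omega> :: "real \<Rightarrow> real"
  assumes T_nonneg: "0 \<le> T" and C_pos: "0 < C" and mu_pos: "0 < \<mu>" and mu_less_C: "\<mu> < C"
    and nu_pos: "0 < \<nu>" and beta_less_nu: "\<beta> < \<nu>" and nu_le_1: "\<nu> \<le> 1"
    and omega_holder: "holder_space \<nu> 0 T \<omega>"
begin

definition gauge :: "real \<Rightarrow> real \<Rightarrow> real" where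
  "gauge s t = C * ((t - s) powr (1 - \<beta>) + (t - s) powr (\<nu> - \<beta>) * holder_semi \<nu> \<omega> s t)"

definition next_stop :: "real \<Rightarrow> real" where
  "next_stop a = Sup {t \<in> {a..T}. gauge a t \<le> \<mu>}"

abbreviation stop :: "nat \<Rightarrow> real" where
  "stop \<equiv> stop_time C \<mu> \<beta> \<nu> \<omega> T"

lemma stop_Suc [simp]: "stop (Suc i) = next_stop (stop i)"
  by (simp add: stop_time.simps(2) next_stop_def gauge_def Let_def)

lemma omega_holder_subinterval: "0 \<le> a \<Longrightarrow> b \<le> T \<Longrightarrow> holder_space \<nu> a b \<omega>"
  using holder_space_subinterval[OF omega_holder] by simp

lemma gauge_self [simp]: "gauge a a = 0"
  by (simp add: gauge_def holder_semi_def)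

lemma gauge_mono:
  assumes "0 \<le> a" "a \<le> u" "u \<le> u'" "u' \<le> T"
  shows "gauge a u \<le> gauge a u'"
proof -
  have "holder_semi \<nu> \<omega> a u \<le> holder_semi \<nu> \<omega> a u'"
    using assms by (intro holder_semi_mono omega_holder_subinterval) auto
  moreover have "0 \<le> holder_semi \<nu> \<omega> a u"
    using assms by (intro holder_semi_nonneg omega_holder_subinterval) auto
  moreover have "(u - a) powr (1 - \<beta>) \<le> (u' - a) powr (1 - \<beta>)"
    and "(u - a) powr (\<nu> - \<beta>) \<le> (u' - a) powr (\<nu> - \<beta>)"
    using assms beta_less_nu nu_le_1 by (intro powr_mono2; simp)+
  ultimately show ?thesis
    unfolding gauge_def using C_pos by (intro mult_left_mono add_mono mult_mono) auto
qed

lemma gauge_le_global: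
  assumes "0 \<le> a" "a \<le> u" "u \<le> T" "u - a \<le> \<delta>"
  shows "gauge a u \<le> C * (\<delta> powr (1 - \<beta>) + \<delta> powr (\<nu> - \<beta>) * holder_semi \<nu> \<omega> 0 T)"
proof -
  have "holder_semi \<nu> \<omega> a u \<le> holder_semi \<nu> \<omega> 0 T"
    using assms by (intro holder_semi_mono[OF omega_holder]) auto
  moreover have "0 \<le> holder_semi \<nu> \<omega> a u"
    using assms by (intro holder_semi_nonneg omega_holder_subinterval) auto
  moreover have "(u - a) powr (1 - \<beta>) \<le> \<delta> powr (1 - \<beta>)"
    and "(u - a) powr (\<nu> - \<beta>) \<le> \<delta> powr (\<nu> - \<beta>)"
    using assms beta_less_nu nu_le_1 by (intro powr_mono2; simp)+
  ultimately show ?thesis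
    unfolding gauge_def using C_pos by (intro mult_left_mono add_mono mult_mono) auto
qed

lemma gauge_tendsto_at_left:
  assumes "0 \<le> a" "a < b" "b \<le> T"
  shows "(gauge a \<longlongrightarrow> gauge a b) (at_left b)"
proof -
  have "((\<lambda>u. holder_semi \<nu> \<omega> a u) \<longlongrightarrow> holder_semi \<nu> \<omega> a b) (at_left b)"
    using assms nu_pos by (intro holder_semi_tendsto_at_left omega_holder_subinterval) auto
  then show ?thesis
    unfolding gauge_def using assms by (intro tendsto_intros) auto
qed

lemma gauge_le_imp_diff_less_1:
  assumes "0 \<le> a" "a \<le> t" "t \<le> T" "gauge a t \<le> \<mu>"
  shows "t - a < 1"
proof (rule ccontr)
  assume "\<not> t - a < 1"
  then have "1 \<le> (t - a) powr (1 - \<beta>)"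
    using beta_less_nu nu_le_1 by (intro ge_one_powr_ge_zero) auto
  moreover have "0 \<le> holder_semi \<nu> \<omega> a t"
    using assms by (intro holder_semi_nonneg omega_holder_subinterval) auto
  ultimately have "1 \<le> (t - a) powr (1 - \<beta>) + (t - a) powr (\<nu> - \<beta>) * holder_semi \<nu> \<omega> a t"
    by (simp add: add_increasing2)
  then have "C * 1 \<le> gauge a t"
    unfolding gauge_def using C_pos by (intro mult_left_mono) auto
  then show False using assms(4) mu_less_C by simp
qed

lemma le_next_stop:
  assumes "a \<le> u" "u \<le> T" "gauge a u \<le> \<mu>"
  shows "u \<le> next_stop a"
  unfolding next_stop_def using assms by (intro cSup_upper) (auto intro: bdd_aboveI[of _ T])

lemma next_stop_bounds:
  assumes "a \<le> T"
  shows "a \<le> next_stop a" "next_stop a \<le> T"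
proof -
  show "a \<le> next_stop a" using assms mu_pos by (intro le_next_stop) auto
  show "next_stop a \<le> T"
    unfolding next_stop_def using assms mu_pos by (intro cSup_least) auto
qed

lemma gauge_le_until_next_stop:
  assumes "0 \<le> a" "a \<le> T" "a \<le> u" "u \<le> next_stop a"
  shows "gauge a u \<le> \<mu>"
proof -
  define b where "b = next_stop a"
  have b: "a \<le> b" "b \<le> T" unfolding b_def using next_stop_bounds[OF assms(2)] by auto
  have below: "gauge a v \<le> \<mu>" if "a \<le> v" "v < b" for v
  proof -
    have "\<exists>x\<in>{t \<in> {a..T}. gauge a t \<le> \<mu>}. v < x"
      using that assms(2) mu_pos by (intro less_cSupD) (auto simp: b_def next_stop_def)
    then obtain w where "a \<le> w" "w \<le> T" "gauge a w \<le> \<mu>" "v < w" by auto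
    with gauge_mono[of a v w] that assms(1) show ?thesis by linarith
  qed
  show ?thesis
  proof (cases "u < b \<or> a = b")
    case True
    then show ?thesis using below[of u] assms(3,4) mu_pos unfolding b_def by auto
  next
    case False
    then have "u = b" "a < b" using assms b unfolding b_def by auto
    have "eventually (\<lambda>v. gauge a v \<le> \<mu>) (at_left b)"
      using eventually_at_left_real[OF \<open>a < b\<close>] by (rule eventually_mono) (use below in auto)
    with gauge_tendsto_at_left[OF assms(1) \<open>a < b\<close> b(2)] show ?thesis
      unfolding \<open>u = b\<close> by (intro tendsto_upperbound) auto
  qed
qed

lemma next_stop_uniform_step: "\<exists>\<delta>>0. \<forall>a\<in>{0..T}. min T (a + \<delta>) \<le> next_stop a"
proof -
  define f where "f \<delta> = C * (\<delta> powr (1 - \<beta>) + \<delta> powr (\<nu> - \<beta>) * holder_semi \<nu> \<omega> 0 T)" for \<delta>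
  have "(f \<longlongrightarrow> C * (0 powr (1 - \<beta>) + 0 powr (\<nu> - \<beta>) * holder_semi \<nu> \<omega> 0 T)) (at_right 0)"
    unfolding f_def using beta_less_nu nu_le_1
    by (intro tendsto_intros) (auto intro: eventually_mono[OF eventually_at_right_less])
  then have "eventually (\<lambda>\<delta>. f \<delta> < \<mu>) (at_right 0)"
    using mu_pos by (intro order_tendstoD(2)) auto
  then obtain b where "0 < b" "\<And>\<delta>. 0 < \<delta> \<Longrightarrow> \<delta> < b \<Longrightarrow> f \<delta> < \<mu>"
    by (auto simp: eventually_at_right_field)
  then obtain \<delta> where \<delta>: "0 < \<delta>" "f \<delta> < \<mu>"
    using field_lbound_gt_zero[of b b] by blast
  have "min T (a + \<delta>) \<le> next_stop a" if "a \<in> {0..T}" for a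
  proof (rule le_next_stop)
    have "gauge a (min T (a + \<delta>)) \<le> f \<delta>"
      unfolding f_def using that \<delta> by (intro gauge_le_global) auto
    with \<delta> show "gauge a (min T (a + \<delta>)) \<le> \<mu>" by simp
  qed (use that \<delta> in auto)
  with \<delta> show ?thesis by blast
qed

lemma stop_bounds: "0 \<le> stop i \<and> stop i \<le> T"
  by (induction i) (use T_nonneg next_stop_bounds in \<open>auto intro: order_trans\<close>)

lemma stop_mono: "i \<le> j \<Longrightarrow> stop i \<le> stop j"
  by (rule lift_Suc_mono_le) (use stop_bounds next_stop_bounds in auto)

lemma gauge_le_between_stops: "stop i \<le> u \<Longrightarrow> u \<le> stop (Suc i) \<Longrightarrow> gauge (stop i) u \<le> \<mu>"
  using gauge_le_until_next_stop stop_bounds by simp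

lemma stop_reaches_T: "\<exists>n. stop n = T"
proof -
  obtain \<delta> where \<delta>: "\<delta> > 0" "\<And>a. a \<in> {0..T} \<Longrightarrow> min T (a + \<delta>) \<le> next_stop a"
    using next_stop_uniform_step by blast
  have lower: "min T (real n * \<delta>) \<le> stop n" for n
  proof (induction n)
    case (Suc n)
    have "min T (real (Suc n) * \<delta>) \<le> min T (stop n + \<delta>)"
      using Suc \<delta>(1) by (simp add: distrib_right min_def split: if_splits; linarith)
    also have "\<dots> \<le> stop (Suc n)" using \<delta>(2) stop_bounds by simp
    finally show ?case .
  qed (use T_nonneg in simp)
  obtain n :: nat where "T / \<delta> < real n" using reals_Archimedean2 by blast
  then have "T \<le> min T (real n * \<delta>)" using \<delta>(1) by (simp add: divide_less_eq)
  then show ?thesis using lower[of n] stop_bounds[of n] by (intro exI[of _ n]) linarith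
qed

lemma stop_interval_within_count:
  assumes "t \<in> {0..T}"
  shows "\<exists>n \<le> count_stop C \<mu> \<beta> \<nu> \<omega> T t. stop n \<le> t \<and> t \<le> stop (Suc n)"
proof -
  obtain m where "stop m = T" using stop_reaches_T by blast
  then have ex: "\<exists>k. t \<le> stop (Suc k)"
    using assms stop_mono[of m "Suc m"] by (intro exI[of _ m]) auto
  define n where "n = (LEAST k. t \<le> stop (Suc k))"
  have n_upper: "t \<le> stop (Suc n)" unfolding n_def by (rule LeastI_ex[OF ex])
  have before_n: "stop j < t" if "1 \<le> j" "j \<le> n" for j
  proof -
    have "j - 1 < n" using that by simp
    then have "\<not> t \<le> stop (Suc (j - 1))" unfolding n_def by (rule not_less_Least)
    then show ?thesis using that by simp
  qed
  have n_lower: "stop n \<le> t"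
    using assms before_n[of n] by (cases n) auto
  have "{i. 1 \<le> i \<and> stop i < t} \<subseteq> {..n}"
  proof (rule subsetI, rule ccontr)
    fix i assume "i \<in> {i. 1 \<le> i \<and> stop i < t}" "i \<notin> {..n}"
    then show False using stop_mono[of "Suc n" i] n_upper by simp
  qed
  then have "finite {i. 1 \<le> i \<and> stop i < t}" by (rule finite_subset) simp
  then have "card {1..n} \<le> count_stop C \<mu> \<beta> \<nu> \<omega> T t"
    unfolding count_stop_def using before_n by (intro card_mono) auto
  with n_lower n_upper show ?thesis by auto
qed

end

section \<open>The Gronwall estimate\<close>

locale gronwall_setting = stopping_times +
  fixes z :: "real \<Rightarrow> 'a::real_normed_vector" and r A :: real
  assumes r_pos: "0 < r" and A_nonneg: "0 \<le> A" and beta_nonneg: "0 \<le> \<beta>"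
    and mu_less_half: "\<mu> < 1 / 2"
    and z_holder: "holder_space \<beta> (-r) T z"
    and growth: "\<And>s t. 0 \<le> s \<Longrightarrow> s \<le> t \<Longrightarrow> t \<le> T \<Longrightarrow>
      holder_semi \<beta> z s t \<le> A + gauge s t * holder_norm \<beta> z (s - r) t"
begin

lemma z_holder_subinterval: "-r \<le> a \<Longrightarrow> b \<le> T \<Longrightarrow> holder_space \<beta> a b z"
  using holder_space_subinterval[OF z_holder] by simp

lemma holder_norm_growth_step:
  assumes "0 \<le> a" "a \<le> t" "t \<le> T" "gauge a t \<le> \<mu>"
  shows "(1 - 2 * \<mu>) * (holder_norm \<beta> z (-r) t + A / \<mu>) \<le> holder_norm \<beta> z (-r) a + A / \<mu>"
proof -
  let ?\<phi> = "\<lambda>t. holder_norm \<beta> z (-r) t"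
  have "t - a \<le> 1" using gauge_le_imp_diff_less_1[OF assms] by simp
  then have split: "?\<phi> t \<le> ?\<phi> a + 2 * holder_semi \<beta> z a t"
    using assms r_pos beta_nonneg by (intro holder_norm_concat_le z_holder_subinterval) auto
  have "holder_norm \<beta> z (a - r) t \<le> ?\<phi> t"
    using assms r_pos beta_nonneg by (intro holder_norm_mono z_holder_subinterval) auto
  moreover have "0 \<le> holder_norm \<beta> z (a - r) t"
    using assms r_pos beta_nonneg by (intro holder_norm_nonneg z_holder_subinterval) auto
  ultimately have "gauge a t * holder_norm \<beta> z (a - r) t \<le> \<mu> * ?\<phi> t"
    using assms(4) mu_pos by (intro mult_mono) auto
  with growth[OF assms(1-3)] split have "?\<phi> t \<le> ?\<phi> a + 2 * A + 2 * \<mu> * ?\<phi> t"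
    by linarith
  then show ?thesis using mu_pos by (simp add: algebra_simps)
qed

lemma holder_norm_stop_interval:
  assumes "stop n \<le> t" "t \<le> stop (Suc n)"
  shows "holder_norm \<beta> z (-r) t + A / \<mu> \<le> (A / \<mu> + holder_norm \<beta> z (-r) 0) / (1 - 2 * \<mu>) ^ Suc n"
proof -
  define \<psi> where "\<psi> t = holder_norm \<beta> z (-r) t + A / \<mu>" for t
  have pos: "0 < 1 - 2 * \<mu>" using mu_less_half by simp
  have step: "\<psi> t \<le> \<psi> (stop i) / (1 - 2 * \<mu>)" if "stop i \<le> t" "t \<le> stop (Suc i)" for i t
    using holder_norm_growth_step[of "stop i" t] gauge_le_between_stops[OF that] that
      stop_bounds[of i] stop_bounds[of "Suc i"] pos
    by (simp add: \<psi>_def pos_le_divide_eq mult.commute)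
  have "\<psi> t \<le> \<psi> 0 / (1 - 2 * \<mu>) ^ Suc n"
    using assms
  proof (induction n arbitrary: t)
    case 0
    then show ?case using step[of 0 t] by simp
  next
    case (Suc n)
    have "\<psi> t \<le> \<psi> (stop (Suc n)) / (1 - 2 * \<mu>)" by (rule step[OF Suc.prems])
    also have "\<dots> \<le> \<psi> 0 / (1 - 2 * \<mu>) ^ Suc n / (1 - 2 * \<mu>)"
      using Suc.IH[of "stop (Suc n)"] stop_mono[of n "Suc n"] pos
      by (intro divide_right_mono) auto
    finally show ?case by (simp add: divide_divide_eq_left mult.commute)
  qed
  then show ?thesis by (simp add: \<psi>_def add.commute)
qed

theorem holder_norm_segment_bound:
  assumes "t \<in> {0..T}"
  shows "holder_norm \<beta> (\<lambda>u. z (t + u)) (-r) 0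
    \<le> (1 - 2 * \<mu>) powr (- (real (count_stop C \<mu> \<beta> \<nu> \<omega> T t) + 1))
      * (A / \<mu> + holder_norm \<beta> z (-r) 0)"
proof -
  define N where "N = count_stop C \<mu> \<beta> \<nu> \<omega> T t"
  define K where "K = A / \<mu> + holder_norm \<beta> z (-r) 0"
  have pos: "0 < 1 - 2 * \<mu>" using mu_less_half by simp
  have K: "0 \<le> K"
    unfolding K_def using A_nonneg mu_pos r_pos beta_nonneg T_nonneg
    by (intro add_nonneg_nonneg holder_norm_nonneg z_holder_subinterval) auto
  obtain n where n: "n \<le> N" "stop n \<le> t" "t \<le> stop (Suc n)"
    using stop_interval_within_count[OF assms] unfolding N_def by blast
  have "holder_norm \<beta> (\<lambda>u. z (t + u)) (-r) 0 = holder_norm \<beta> z (t - r) t"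
    by (simp add: holder_norm_translate)
  also have "\<dots> \<le> holder_norm \<beta> z (-r) t"
    using assms r_pos beta_nonneg by (intro holder_norm_mono z_holder_subinterval) auto
  also have "\<dots> \<le> K / (1 - 2 * \<mu>) ^ Suc n"
    using holder_norm_stop_interval[OF n(2,3)] divide_nonneg_pos[OF A_nonneg mu_pos]
    unfolding K_def by linarith
  also have "\<dots> \<le> K / (1 - 2 * \<mu>) ^ Suc N"
    using K pos mu_pos n(1) by (intro divide_left_mono power_decreasing mult_pos_pos) auto
  also have "\<dots> = K / (1 - 2 * \<mu>) powr real (Suc N)"
    using pos by (simp only: powr_realpow)
  also have "\<dots> = (1 - 2 * \<mu>) powr (- (real N + 1)) * K"
    unfolding powr_minus_divide by (simp add: add.commute)
  finally show ?thesis unfolding N_def K_def .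
qed

end

theorem lemma5:
  fixes z :: "real \<Rightarrow> 'a::euclidean_space" and \<omega> :: "real \<Rightarrow> real"
    and r T \<nu> \<beta> A C \<mu> :: real
  assumes r: "r > 0" and T: "T > 0"
    and nu: "1/2 < \<nu>" "\<nu> \<le> 1" and beta: "0 < \<beta>" "\<beta> < \<nu>"
    and omega_hol: "holder_space \<nu> 0 T \<omega>"
    and omega_lim: "\<forall>\<epsilon>>0. \<exists>h>0. \<forall>s t. 0 \<le> s \<and> s < t \<and> t \<le> T \<and> t - s \<le> h \<longrightarrow>
                      \<bar>\<omega> t - \<omega> s\<bar> / (t - s) powr \<nu> \<le> \<epsilon>"
    and z_hol: "holder_space \<beta> (-r) T z"
    and A: "A > 0" and C: "C > 0"
    and hyp: "\<forall>s t. 0 \<le> s \<and> s \<le> t \<and> t \<le> T \<longrightarrow>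
               holder_semi \<beta> z s t \<le> A + C * ((t - s) powr (1 - \<beta>)
                 + (t - s) powr (\<nu> - \<beta>) * holder_semi \<nu> \<omega> s t) * holder_norm \<beta> z (s - r) t"
    and mu: "0 < \<mu>" "\<mu> < min (1/2) C"
  shows "\<forall>t \<in> {0..T}. holder_norm \<beta> (\<lambda>u. z (t + u)) (-r) 0
           \<le> (1 - 2 * \<mu>) powr (- (real (count_stop C \<mu> \<beta> \<nu> \<omega> T t) + 1))
              * (A / \<mu> + holder_norm \<beta> z (-r) 0)"
proof -
  interpret stopping_times C \<mu> \<beta> \<nu> T \<omega>
    using T C mu beta nu omega_hol by unfold_locales auto
  interpret gronwall_setting C \<mu> \<beta> \<nu> T \<omega> z r A
    using r A beta mu z_hol hyp by unfold_locales (auto simp: gauge_def)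
  show ?thesis using holder_norm_segment_bound by blast
qed

end
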